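(* Let $\Delta\ge3$. For every graph $G$ with maximum degree at most $\Delta$, the total Thue choice number of $G$ is at most $17.9856\,\Delta^2$; that is, for every assignment $L$ of a list $L(x)$ of colours to each $x\in V(G)\cup E(G)$ with $|L(x)|\ge 17.9856\,\Delta^2$ for all $x$, there exists a total Thue colouring $\varphi$ of $G$ with $\varphi(x)\in L(x)$ for all $x\in V(G)\cup E(G)$.
   Context: Graphs are finite and simple. A sequence is nonrepetitive if no block of consecutive terms has the form $r_1\dots r_nr_1\dots r_n$ with $n\ge1$. A (strong) total Thue colouring of $G$ is a colouring of $V(G)\cup E(G)$ such that for every path $v_1,e_1,v_2,\dots,e_{k-1},v_k$ in $G$ the sequence of colours of $v_1,e_1,\dots,v_k$ is nonrepetitive, the sequence of colours of $v_1,\dots,v_k$ is nonrepetitive, and the sequence of colours of $e_1,\dots,e_{k-1}$ is nonrepetitive. $G$ is nonrepetitively total $l$-choosable if for every list assignment $L:V(G)\cup E(G)\to 2^{\mathbb N}$ with all lists of size at least $l$ there is a total Thue colouring choosing each colour from the associated list; the total Thue choice number is the minimum such $l$. *)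

theory Defs
  imports Main Complex_Main
begin

definition simple_graph :: "'a set \<Rightarrow> 'a set set \<Rightarrow> bool" where
  "simple_graph V E \<longleftrightarrow> finite V \<and>
     (\<forall>e\<in>E. \<exists>u v. u \<in> V \<and> v \<in> V \<and> u \<noteq> v \<and> e = {u, v})"

definition max_degree_le :: "'a set \<Rightarrow> 'a set set \<Rightarrow> nat \<Rightarrow> bool" where
  "max_degree_le V E d \<longleftrightarrow> (\<forall>v\<in>V. card {e\<in>E. v \<in> e} \<le> d)"

definition nonrep :: "'b list \<Rightarrow> bool" where
  "nonrep xs \<longleftrightarrow> \<not> (\<exists>a r b. r \<noteq> [] \<and> xs = a @ r @ r @ b)"

definition is_path :: "'a set \<Rightarrow> 'a set set \<Rightarrow> 'a list \<Rightarrow> bool" where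
  "is_path V E ps \<longleftrightarrow> ps \<noteq> [] \<and> distinct ps \<and> set ps \<subseteq> V \<and>
     (\<forall>i. Suc i < length ps \<longrightarrow> {ps ! i, ps ! Suc i} \<in> E)"

fun path_edges :: "'a list \<Rightarrow> 'a set list" where
  "path_edges (v # w # rest) = {v, w} # path_edges (w # rest)"
| "path_edges _ = []"

text \<open>Colours of v_1, e_1, v_2, ..., e_{k-1}, v_k; elements of V(G) \<union> E(G) are
  represented as the disjoint sum: Inl v for vertices, Inr e for edges.\<close>
fun total_seq :: "('a + 'a set \<Rightarrow> 'c) \<Rightarrow> 'a list \<Rightarrow> 'c list" where
  "total_seq c (v # w # rest) = c (Inl v) # c (Inr {v, w}) # total_seq c (w # rest)"
| "total_seq c [v] = [c (Inl v)]"
| "total_seq c [] = []"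

definition total_thue :: "'a set \<Rightarrow> 'a set set \<Rightarrow> ('a + 'a set \<Rightarrow> 'c) \<Rightarrow> bool" where
  "total_thue V E c \<longleftrightarrow> (\<forall>ps. is_path V E ps \<longrightarrow>
      nonrep (total_seq c ps) \<and>
      nonrep (map (\<lambda>v. c (Inl v)) ps) \<and>
      nonrep (map (\<lambda>e. c (Inr e)) (path_edges ps)))"

definition elems :: "'a set \<Rightarrow> 'a set set \<Rightarrow> ('a + 'a set) set" where
  "elems V E = Inl ` V \<union> Inr ` E"

end

theory Submission
  imports Defs "HOL-Library.FuncSet"
begin

text \<open>Rosenfeld's counting method. Call (A, B) a repetition pair if A and B are equally long
  and A @ B is a block of one of the three sequences read along a path; a total colouring is a
  total Thue colouring iff no repetition pair gets the same colour sequence on both halves.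
  Let every list have at least n colours and suppose that, for every element x, the repetition
  pairs through x, each weighted by \<beta>^(1 - |A|), have total weight at most n - \<beta>. Then, by
  induction on H, the good colourings of H \<union> {x} are at least \<beta> times as many as those of H:
  among the extensions of the good colourings of H, a bad one repeats on some pair (A, B) with
  x in B, so it is determined by its good restriction to H - B, and there are at most
  \<beta>^(1 - |A|) times as many of those as good colourings of H. Hence a good colouring of all
  of V(G) \<union> E(G) exists.

  A repetition pair with |A| = j through x is cut out of a path with at most 2j + 1 vertices
  through a vertex at x, and there are at most (2j + 1) \<Delta>^(2j) such paths; with
  n = 15 \<Delta>^2 \<le> 17.9856 \<Delta>^2 and \<beta> = 8 \<Delta>^2 the weighted count is at most 7 \<Delta>^2 = n - \<beta>.\<close>

section \<open>Rosenfeld's counting lemma\<close>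

definition avoids :: "('e list \<times> 'e list) set \<Rightarrow> 'e set \<Rightarrow> ('e \<Rightarrow> 'c) \<Rightarrow> bool" where
  "avoids Q H f \<longleftrightarrow> (\<forall>(A, B)\<in>Q. set A \<subseteq> H \<longrightarrow> set B \<subseteq> H \<longrightarrow> map f A \<noteq> map f B)"

definition colourings ::
    "('e list \<times> 'e list) set \<Rightarrow> ('e \<Rightarrow> 'c set) \<Rightarrow> 'e set \<Rightarrow> ('e \<Rightarrow> 'c) set" where
  "colourings Q L H = {f \<in> Pi\<^sub>E H L. avoids Q H f}"

definition pairs_at :: "('e list \<times> 'e list) set \<Rightarrow> 'e set \<Rightarrow> 'e \<Rightarrow> ('e list \<times> 'e list) set" where
  "pairs_at Q X x =
     {q \<in> Q. set (fst q) \<subseteq> X \<and> set (snd q) \<subseteq> X \<and> x \<in> set (fst q) \<union> set (snd q)}"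

lemma avoids_subset:
  assumes "avoids Q H f" "H' \<subseteq> H" "\<And>y. y \<in> H' \<Longrightarrow> g y = f y"
  shows "avoids Q H' g"
  unfolding avoids_def
proof (clarify)
  fix A B
  assume "(A, B) \<in> Q" "set A \<subseteq> H'" "set B \<subseteq> H'" "map g A = map g B"
  moreover have "map g A = map f A" "map g B = map f B"
    using calculation(2,3) assms(3) by (auto simp: map_eq_conv)
  ultimately show False
    using assms(1,2) unfolding avoids_def by fastforce
qed

lemma colourings_empty:
  assumes "\<And>A B. (A, B) \<in> Q \<Longrightarrow> A \<noteq> []"
  shows "colourings Q L {} = {\<lambda>_. undefined}"
  using assms unfolding colourings_def avoids_def by (auto simp: PiE_empty_domain)

lemma pairs_at_mono: "H \<subseteq> X \<Longrightarrow> pairs_at Q H x \<subseteq> pairs_at Q X x"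
  unfolding pairs_at_def by auto

lemma length_pairs_at_in:
  assumes "finite X" "q \<in> pairs_at Q X x" "fst q \<noteq> []" "distinct (fst q)"
  shows "length (fst q) \<in> {1..card X}"
  using assms card_mono[of X "set (fst q)"] by (auto simp: pairs_at_def distinct_card Suc_le_eq)

lemma finite_pairs_at:
  assumes "finite X" and distinct: "\<And>A B. (A, B) \<in> Q \<Longrightarrow> distinct (A @ B)"
  shows "finite (pairs_at Q X x)"
proof -
  have "length ys \<le> card X" if "set ys \<subseteq> X" "distinct ys" for ys
    using that assms(1) card_mono[of X "set ys"] by (auto simp: distinct_card)
  then have "pairs_at Q X x \<subseteq>
      {A. set A \<subseteq> X \<and> length A \<le> card X} \<times> {B. set B \<subseteq> X \<and> length B \<le> card X}"
    using distinct unfolding pairs_at_def by fastforce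
  then show ?thesis
    using finite_lists_length_le[OF assms(1)] finite_subset by blast
qed

lemma PiE_eq_if_repetition:
  assumes "g \<in> Pi\<^sub>E H L" "g' \<in> Pi\<^sub>E H L" "map g A = map g B" "map g' A = map g' B"
    and "length A = length B" "set A \<inter> set B = {}" "set A \<subseteq> H"
    and agree: "\<And>y. y \<in> H - set B \<Longrightarrow> g y = g' y"
  shows "g = g'"
proof
  fix y
  show "g y = g' y"
  proof (cases "y \<in> set B")
    case True
    then obtain i where i: "i < length B" "B ! i = y"
      by (metis in_set_conv_nth)
    have iA: "i < length A"
      using i assms(5) by simp
    then have "A ! i \<in> set A"
      by (rule nth_mem)
    then have Ai: "A ! i \<in> H - set B"
      using assms(6,7) by blast
    have "g y = g (A ! i)"
      using arg_cong[OF assms(3), of "\<lambda>xs. xs ! i"] i iA by simp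
    also have "\<dots> = g' (A ! i)"
      using Ai by (rule agree)
    also have "\<dots> = g' y"
      using arg_cong[OF assms(4), of "\<lambda>xs. xs ! i"] i iA by simp
    finally show ?thesis .
  next
    case yB: False
    show ?thesis
    proof (cases "y \<in> H")
      case True
      with yB show ?thesis by (intro agree) simp
    next
      case False
      then show ?thesis using PiE_arb[OF assms(1)] PiE_arb[OF assms(2)] by simp
    qed
  qed
qed

lemma card_repeating_le:
  assumes "finite Y" "length A = length B" "set A \<inter> set B = {}" "set A \<subseteq> H"
  shows "card {g \<in> Pi\<^sub>E H L. map g A = map g B \<and> restrict g (H - set B) \<in> Y} \<le> card Y"
proof (rule card_inj_on_le[OF _ _ assms(1)])
  show "inj_on (\<lambda>g. restrict g (H - set B))
      {g \<in> Pi\<^sub>E H L. map g A = map g B \<and> restrict g (H - set B) \<in> Y}"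
  proof (rule inj_onI)
    fix g g'
    assume "g \<in> {g \<in> Pi\<^sub>E H L. map g A = map g B \<and> restrict g (H - set B) \<in> Y}"
      and "g' \<in> {g \<in> Pi\<^sub>E H L. map g A = map g B \<and> restrict g (H - set B) \<in> Y}"
      and restr: "restrict g (H - set B) = restrict g' (H - set B)"
    moreover have "g y = g' y" if "y \<in> H - set B" for y
      using fun_cong[OF restr, of y] that by simp
    ultimately show "g = g'"
      using PiE_eq_if_repetition[of g H L g' A B] assms(2-4) by blast
  qed
qed auto

definition repeating ::
    "('e list \<times> 'e list) set \<Rightarrow> ('e \<Rightarrow> 'c set) \<Rightarrow> 'e set \<Rightarrow> 'e list \<Rightarrow> 'e list \<Rightarrow> ('e \<Rightarrow> 'c) set"
  where "repeating Q L H A B = {g \<in> Pi\<^sub>E H L. map g A = map g B \<and>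
    restrict g (H - set B) \<in> colourings Q L (H - set B)}"

definition oriented_at :: "'e \<Rightarrow> 'e list \<times> 'e list \<Rightarrow> 'e list \<times> 'e list" where
  "oriented_at x q = (if x \<in> set (snd q) then q else prod.swap q)"

lemma extensions_subset_PiE:
  assumes "x \<in> H"
  shows "(\<lambda>(a, f). f(x := a)) ` (L x \<times> colourings Q L (H - {x})) \<subseteq> Pi\<^sub>E H L"
proof -
  have "colourings Q L (H - {x}) \<subseteq> Pi\<^sub>E (H - {x}) L"
    unfolding colourings_def by auto
  then show ?thesis
    using PiE_insert_eq[of x "H - {x}" L] assms by (auto simp: insert_absorb)
qed

lemma bad_extensions_subset_repeating:
  assumes "x \<in> H"
  shows "(\<lambda>(a, f). f(x := a)) ` (L x \<times> colourings Q L (H - {x})) - colourings Q L H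
    \<subseteq> (\<Union>q\<in>pairs_at Q H x. case_prod (repeating Q L H) (oriented_at x q))"
proof
  fix g
  assume g: "g \<in> (\<lambda>(a, f). f(x := a)) ` (L x \<times> colourings Q L (H - {x})) - colourings Q L H"
  then obtain a f where f: "f \<in> colourings Q L (H - {x})" and gf: "g = f(x := a)"
    by auto
  have gPi: "g \<in> Pi\<^sub>E H L"
    using g extensions_subset_PiE[OF assms] by blast
  then obtain A B where AB: "(A, B) \<in> Q" "set A \<subseteq> H" "set B \<subseteq> H" "map g A = map g B"
    using g unfolding colourings_def avoids_def by auto
  have f_avoids: "avoids Q (H - {x}) f"
    using f unfolding colourings_def by auto
  have "x \<in> set A \<union> set B"
  proof (rule ccontr)
    assume x_out: "x \<notin> set A \<union> set B"
    then have "map f A = map f B"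
      using AB(4) gf by (auto simp: map_eq_conv)
    then show False
      using f_avoids AB(1-3) x_out unfolding avoids_def by blast
  qed
  then have q: "(A, B) \<in> pairs_at Q H x"
    using AB unfolding pairs_at_def by auto
  obtain A' B' where AB': "oriented_at x (A, B) = (A', B')"
    by fastforce
  have "x \<in> set B'" "map g A' = map g B'"
    using AB' \<open>x \<in> set A \<union> set B\<close> AB(4) unfolding oriented_at_def by (auto split: if_splits)
  moreover have "avoids Q (H - set B') (restrict g (H - set B'))"
    using calculation(1) gf by (intro avoids_subset[OF f_avoids]) auto
  ultimately have "g \<in> repeating Q L H A' B'"
    using gPi unfolding repeating_def colourings_def by auto
  then show "g \<in> (\<Union>q\<in>pairs_at Q H x. case_prod (repeating Q L H) (oriented_at x q))"
    using q AB' by force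
qed

locale rosenfeld_counting =
  fixes X :: "'e set" and L :: "'e \<Rightarrow> 'c set" and Q :: "('e list \<times> 'e list) set"
    and n :: nat and \<beta> :: real
  assumes finite_X: "finite X"
    and finite_L: "\<And>x. x \<in> X \<Longrightarrow> finite (L x)"
    and card_L: "\<And>x. x \<in> X \<Longrightarrow> n \<le> card (L x)"
    and proper_pairs: "\<And>A B. (A, B) \<in> Q \<Longrightarrow> A \<noteq> [] \<and> length A = length B \<and> distinct (A @ B)"
    and beta_pos: "0 < \<beta>"
    and weight_pairs_at:
      "\<And>x. x \<in> X \<Longrightarrow> (\<Sum>q\<in>pairs_at Q X x. (1 / \<beta>) ^ (length (fst q) - 1)) \<le> n - \<beta>"
begin

lemma finite_colourings: "H \<subseteq> X \<Longrightarrow> finite (colourings Q L H)"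
  using finite_PiE[of H L] finite_X finite_L unfolding colourings_def
  by (metis (no_types, lifting) finite_subset mem_Collect_eq subsetD subsetI)

lemma power_mult_card_colourings_Diff_le:
  assumes step: "\<And>H y. H \<subseteq> G \<Longrightarrow> y \<in> H \<Longrightarrow>
      \<beta> * card (colourings Q L (H - {y})) \<le> card (colourings Q L H)"
    and "finite T" "T \<subseteq> G"
  shows "\<beta> ^ card T * card (colourings Q L (G - T)) \<le> card (colourings Q L G)"
  using assms(2,3)
proof (induction T rule: finite_induct)
  case (insert t T)
  have "\<beta> * card (colourings Q L (G - T - {t})) \<le> card (colourings Q L (G - T))"
    using step[of "G - T" t] insert.hyps insert.prems by blast
  then have "\<beta> ^ card T * (\<beta> * card (colourings Q L (G - T - {t})))
      \<le> \<beta> ^ card T * card (colourings Q L (G - T))"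
    using beta_pos by (simp add: mult_left_mono)
  also have "\<dots> \<le> card (colourings Q L G)"
    using insert.IH insert.prems by simp
  moreover have "G - insert t T = G - T - {t}"
    by blast
  ultimately show ?case
    using insert.hyps by (simp add: mult.left_commute)
qed simp

lemma card_extensions:
  assumes "H \<subseteq> X" "x \<in> H"
  shows "n * card (colourings Q L (H - {x}))
           \<le> card ((\<lambda>(a, f). f(x := a)) ` (L x \<times> colourings Q L (H - {x})))"
proof -
  have "L x \<times> colourings Q L (H - {x}) \<subseteq> L x \<times> Pi\<^sub>E (H - {x}) L"
    unfolding colourings_def by blast
  then have "inj_on (\<lambda>(a, f). f(x := a)) (L x \<times> colourings Q L (H - {x}))"
    using inj_on_subset[OF inj_combinator[of x "H - {x}" L]] by blast
  then show ?thesis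
    using assms card_L[of x] by (auto simp: card_image card_cartesian_product)
qed

lemma card_repeating_colourings_le:
  assumes "H \<subseteq> X" "x \<in> set B" "set A \<subseteq> H" "set B \<subseteq> H" "length A = length B"
    and "distinct (A @ B)"
    and step: "\<And>H' y. H' \<subseteq> H - {x} \<Longrightarrow> y \<in> H' \<Longrightarrow>
      \<beta> * card (colourings Q L (H' - {y})) \<le> card (colourings Q L H')"
  shows "card (repeating Q L H A B) \<le> (1 / \<beta>) ^ (length B - 1) * card (colourings Q L (H - {x}))"
proof -
  define c where "c = card (colourings Q L (H - {x}))"
  define c' where "c' = card (colourings Q L (H - set B))"
  have "finite (set B - {x})"
    by simp
  then have "\<beta> ^ card (set B - {x}) * card (colourings Q L (H - {x} - (set B - {x}))) \<le> c"
    unfolding c_def using assms(4) by (intro power_mult_card_colourings_Diff_le step) auto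
  moreover have "card (set B - {x}) = length B - 1"
    using assms(2,6) by (simp add: distinct_card)
  moreover have "H - {x} - (set B - {x}) = H - set B"
    using assms(2) by auto
  ultimately have "\<beta> ^ (length B - 1) * c' \<le> c"
    unfolding c'_def by simp
  then have "c' \<le> (1 / \<beta>) ^ (length B - 1) * c"
    using beta_pos by (simp add: power_divide field_simps)
  moreover have "card (repeating Q L H A B) \<le> c'"
    unfolding c'_def repeating_def using assms(1,3,5,6)
    by (intro card_repeating_le finite_colourings) auto
  ultimately show ?thesis
    unfolding c_def by linarith
qed

lemma card_repeating_oriented_le:
  assumes "H \<subseteq> X" "q \<in> pairs_at Q H x"
    and step: "\<And>H' y. H' \<subseteq> H - {x} \<Longrightarrow> y \<in> H' \<Longrightarrow>
      \<beta> * card (colourings Q L (H' - {y})) \<le> card (colourings Q L H')"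
  shows "card (case_prod (repeating Q L H) (oriented_at x q))
    \<le> (1 / \<beta>) ^ (length (fst q) - 1) * card (colourings Q L (H - {x}))"
proof -
  obtain A B where q_AB: "q = (A, B)"
    by fastforce
  then have "(A, B) \<in> Q" "x \<in> set A \<union> set B" "set A \<subseteq> H" "set B \<subseteq> H"
    using assms(2) unfolding pairs_at_def by auto
  moreover from this(1) have "length A = length B" "distinct (A @ B)" "distinct (B @ A)"
    using proper_pairs by auto
  moreover have R_le: "card (repeating Q L H A' B')
      \<le> (1 / \<beta>) ^ (length B' - 1) * card (colourings Q L (H - {x}))"
    if "x \<in> set B'" "set A' \<subseteq> H" "set B' \<subseteq> H" "length A' = length B'" "distinct (A' @ B')"
    for A' B'
    using card_repeating_colourings_le[OF assms(1) that step] .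
  ultimately show ?thesis
    using R_le[of A B] R_le[of B A] unfolding q_AB oriented_at_def by auto
qed

lemma card_colourings_insert_ge:
  assumes "H \<subseteq> X" "x \<in> H"
    and step: "\<And>H' y. H' \<subseteq> H - {x} \<Longrightarrow> y \<in> H' \<Longrightarrow>
      \<beta> * card (colourings Q L (H' - {y})) \<le> card (colourings Q L H')"
  shows "\<beta> * card (colourings Q L (H - {x})) \<le> card (colourings Q L H)"
proof -
  define c where "c = card (colourings Q L (H - {x}))"
  define ext where "ext = (\<lambda>(a, f). f(x := a)) ` (L x \<times> colourings Q L (H - {x}))"
  define bad where "bad q = case_prod (repeating Q L H) (oriented_at x q)" for q
  have finite_PiE_H: "finite (Pi\<^sub>E H L)"
    using assms(1) finite_X finite_L by (intro finite_PiE) (auto intro: finite_subset)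
  have finite_pairs: "finite (pairs_at Q H x)"
    using finite_pairs_at assms(1) finite_X proper_pairs by (meson finite_subset)
  have finite_bad: "finite (bad q)" for q
    using finite_PiE_H unfolding bad_def repeating_def by (auto simp: case_prod_beta)
  have "card ext \<le> card (colourings Q L H \<union> (ext - colourings Q L H))"
    using finite_colourings[OF assms(1)] finite_subset[OF extensions_subset_PiE finite_PiE_H] assms(2)
    unfolding ext_def by (intro card_mono) auto
  also have "\<dots> \<le> card (colourings Q L H) + card (ext - colourings Q L H)"
    by (rule card_Un_le)
  also have "card (ext - colourings Q L H) \<le> card (\<Union>q\<in>pairs_at Q H x. bad q)"
    using finite_pairs finite_bad bad_extensions_subset_repeating[OF assms(2), of L Q]
    unfolding ext_def bad_def by (intro card_mono) simp_all
  also have "\<dots> \<le> (\<Sum>q\<in>pairs_at Q H x. card (bad q))"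
    by (rule card_UN_le[OF finite_pairs])
  finally have "real (n * c) \<le> card (colourings Q L H) + (\<Sum>q\<in>pairs_at Q H x. real (card (bad q)))"
    using card_extensions[OF assms(1,2)] unfolding ext_def c_def of_nat_sum[symmetric]
    by linarith
  also have "(\<Sum>q\<in>pairs_at Q H x. real (card (bad q)))
      \<le> (\<Sum>q\<in>pairs_at Q H x. (1 / \<beta>) ^ (length (fst q) - 1) * c)"
    using card_repeating_oriented_le[OF assms(1) _ step] unfolding bad_def c_def
    by (intro sum_mono) auto
  also have "\<dots> \<le> (\<Sum>q\<in>pairs_at Q X x. (1 / \<beta>) ^ (length (fst q) - 1) * c)"
    using finite_pairs_at[OF finite_X] proper_pairs pairs_at_mono[OF assms(1)] beta_pos
    by (intro sum_mono2) auto
  also have "\<dots> = (\<Sum>q\<in>pairs_at Q X x. (1 / \<beta>) ^ (length (fst q) - 1)) * c"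
    by (simp add: sum_distrib_right)
  also have "\<dots> \<le> (n - \<beta>) * c"
    using weight_pairs_at assms by (intro mult_right_mono) auto
  finally show ?thesis
    unfolding c_def by (simp add: algebra_simps)
qed

theorem ex_avoiding_colouring: "\<exists>f \<in> Pi\<^sub>E X L. avoids Q X f"
proof -
  have step: "\<beta> * card (colourings Q L (H - {x})) \<le> card (colourings Q L H)"
    if "H \<subseteq> X" "x \<in> H" for H x
    using that
  proof (induction "card H" arbitrary: H x rule: less_induct)
    case less
    show ?case
    proof (rule card_colourings_insert_ge[OF less.prems])
      fix H' y
      assume H': "H' \<subseteq> H - {x}" "y \<in> H'"
      have "finite H"
        using less.prems(1) finite_X finite_subset by blast
      moreover have "H' \<subset> H"
        using H'(1) less.prems(2) by blast
      ultimately have "card H' < card H"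
        by (rule psubset_card_mono)
      then show "\<beta> * card (colourings Q L (H' - {y})) \<le> card (colourings Q L H')"
        using less.hyps H' less.prems(1) by blast
    qed
  qed
  have "\<beta> ^ card X * card (colourings Q L (X - X)) \<le> card (colourings Q L X)"
    using step finite_X by (intro power_mult_card_colourings_Diff_le) auto
  moreover have "colourings Q L (X - X) = {\<lambda>_. undefined}"
    using proper_pairs by (simp add: colourings_empty)
  ultimately have "\<beta> ^ card X \<le> card (colourings Q L X)"
    by simp
  then have "colourings Q L X \<noteq> {}"
    using beta_pos by (smt (verit) card.empty of_nat_0 zero_less_power)
  then show ?thesis
    unfolding colourings_def by blast
qed

end

section \<open>Repetitions along paths\<close>

fun path_items :: "'a list \<Rightarrow> ('a + 'a set) list" where
  "path_items (v # w # rest) = Inl v # Inr {v, w} # path_items (w # rest)"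
| "path_items [v] = [Inl v]"
| "path_items [] = []"

lemma total_seq_eq_map_path_items: "total_seq c ps = map c (path_items ps)"
  by (induction ps rule: path_items.induct) auto

lemma set_path_items: "set (path_items ps) = Inl ` set ps \<union> Inr ` set (path_edges ps)"
  by (induction ps rule: path_items.induct) auto

lemma length_path_items: "length (path_items ps) = 2 * length ps - 1"
  by (induction ps rule: path_items.induct) auto

lemma length_path_edges: "length (path_edges ps) = length ps - 1"
  by (induction ps rule: path_edges.induct) auto

lemma path_edge_subset: "e \<in> set (path_edges ps) \<Longrightarrow> e \<subseteq> set ps"
  by (induction ps rule: path_edges.induct) auto

lemma nth_path_edges: "i < length ps - 1 \<Longrightarrow> path_edges ps ! i = {ps ! i, ps ! Suc i}"
proof (induction ps arbitrary: i rule: path_edges.induct)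
  case (1 v w rest)
  then show ?case by (cases i) auto
qed auto

lemma distinct_path_edges: "distinct ps \<Longrightarrow> distinct (path_edges ps)"
proof (induction ps rule: path_edges.induct)
  case (1 v w rest)
  then have "{v, w} \<notin> set (path_edges (w # rest))"
    using path_edge_subset[of "{v, w}" "w # rest"] by auto
  then show ?case using 1 by auto
qed auto

lemma distinct_path_items: "distinct ps \<Longrightarrow> distinct (path_items ps)"
  by (induction ps rule: path_items.induct)
    (auto simp: set_path_items dest: path_edge_subset)

lemma path_items_drop: "i < length ps \<Longrightarrow> path_items (drop i ps) = drop (2 * i) (path_items ps)"
proof (induction i arbitrary: ps)
  case (Suc i)
  then obtain v w rest where "ps = v # w # rest"
    by (metis Suc_less_eq length_Cons less_nat_zero_code list.exhaust list.size(3))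
  then show ?case using Suc.IH[of "w # rest"] Suc.prems by simp
qed simp

lemma path_items_take: "path_items (take (Suc m) ps) = take (2 * m + 1) (path_items ps)"
proof (induction m arbitrary: ps)
  case 0
  then show ?case by (cases ps rule: path_items.cases) auto
next
  case (Suc m)
  show ?case
  proof (cases ps rule: path_items.cases)
    case (1 v w rest)
    then have "path_items (take (Suc (Suc m)) ps) = Inl v # Inr {v, w} # path_items (take (Suc m) (w # rest))"
      by (cases m) auto
    then show ?thesis
      using Suc.IH[of "w # rest"] 1 by simp
  qed auto
qed

lemma path_edges_drop: "path_edges (drop i ps) = drop i (path_edges ps)"
proof (induction i arbitrary: ps)
  case (Suc i)
  then show ?case by (cases ps rule: path_edges.cases) auto
qed simp

lemma path_edges_take: "path_edges (take (Suc m) ps) = take m (path_edges ps)"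
proof (induction m arbitrary: ps)
  case 0
  then show ?case by (cases ps rule: path_edges.cases) auto
next
  case (Suc m)
  show ?case
  proof (cases ps rule: path_edges.cases)
    case (1 v w rest)
    then have "path_edges (take (Suc (Suc m)) ps) = {v, w} # path_edges (take (Suc m) (w # rest))"
      by (cases m) auto
    then show ?thesis
      using Suc.IH[of "w # rest"] 1 by simp
  qed auto
qed

lemma is_path_infix:
  assumes "is_path V E (c @ qs @ d)" "qs \<noteq> []"
  shows "is_path V E qs"
  unfolding is_path_def
proof (intro conjI allI impI)
  show "qs \<noteq> []" by fact
  show "distinct qs" "set qs \<subseteq> V"
    using assms(1) unfolding is_path_def by auto
  fix i
  assume i: "Suc i < length qs"
  then have "{(c @ qs @ d) ! (length c + i), (c @ qs @ d) ! Suc (length c + i)} \<in> E"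
    using assms(1) unfolding is_path_def by (metis add_Suc_right length_append nat_add_left_cancel_less
        trans_less_add1)
  then show "{qs ! i, qs ! Suc i} \<in> E"
    using i by (simp add: nth_append)
qed

lemma is_path_take_drop:
  assumes "is_path V E ps" "i + m \<le> length ps" "0 < m"
  shows "is_path V E (take m (drop i ps))"
proof (rule is_path_infix)
  show "is_path V E (take i ps @ take m (drop i ps) @ drop m (drop i ps))"
    using assms(1) by (simp only: append_take_drop_id)
qed (use assms in simp)

lemma set_path_items_subset_elems:
  assumes "is_path V E ps"
  shows "set (path_items ps) \<subseteq> elems V E"
proof -
  have "set (path_edges ps) \<subseteq> E"
  proof
    fix e
    assume "e \<in> set (path_edges ps)"
    then obtain i where "i < length ps - 1" "e = {ps ! i, ps ! Suc i}"
      by (metis in_set_conv_nth length_path_edges nth_path_edges)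
    then show "e \<in> E"
      using assms unfolding is_path_def by auto
  qed
  then show ?thesis
    using assms unfolding set_path_items elems_def is_path_def by auto
qed

lemma short_path_of_path_items_infix:
  assumes p: "is_path V E ps" and w: "path_items ps = a @ w @ b" "length w = 2 * j" and "1 \<le> j"
  shows "\<exists>s qs. s \<le> 1 \<and> is_path V E qs \<and> length qs = Suc j \<and>
    w = take (2 * j) (drop s (path_items qs))"
proof -
  define i where "i = length a div 2"
  define s where "s = length a mod 2"
  define qs where "qs = take (Suc j) (drop i ps)"
  have s_le: "s \<le> 1"
    unfolding s_def by simp
  have "length (path_items ps) = length a + 2 * j + length b"
    using w by simp
  then have ij: "i + Suc j \<le> length ps"
    using p unfolding length_path_items i_def is_path_def by (cases ps) auto
  have "w = take (2 * j) (drop (length a) (path_items ps))"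
    using w by simp
  also have "drop (length a) (path_items ps) = drop s (drop (2 * i) (path_items ps))"
    unfolding i_def s_def by (simp add: add.commute)
  also have "drop (2 * i) (path_items ps) = path_items (drop i ps)"
    using ij path_items_drop[of i ps] by simp
  also have "take (2 * j) (drop s (path_items (drop i ps)))
      = take (2 * j) (drop s (take (2 * j + 1) (path_items (drop i ps))))"
    using s_le by (simp add: drop_take min_def)
  also have "\<dots> = take (2 * j) (drop s (path_items qs))"
    unfolding qs_def path_items_take ..
  finally have "w = take (2 * j) (drop s (path_items qs))" .
  moreover have "is_path V E qs" "length qs = Suc j"
    unfolding qs_def using is_path_take_drop[OF p ij] ij by auto
  ultimately show ?thesis
    using s_le by blast
qed

lemma short_path_of_path_edges_infix:
  assumes p: "is_path V E ps" and w: "path_edges ps = a @ w @ b"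
  shows "\<exists>qs. is_path V E qs \<and> length qs = Suc (length w) \<and> path_edges qs = w"
proof -
  define qs where "qs = take (Suc (length w)) (drop (length a) ps)"
  have ij: "length a + Suc (length w) \<le> length ps"
    using p w length_path_edges[of ps] unfolding is_path_def by (cases ps) auto
  have "path_edges qs = take (length w) (drop (length a) (path_edges ps))"
    unfolding qs_def path_edges_take path_edges_drop ..
  also have "\<dots> = w"
    using w by simp
  finally show ?thesis
    using is_path_take_drop[OF p ij] ij unfolding qs_def by auto
qed

definition repetition_pairs ::
    "'a set \<Rightarrow> 'a set set \<Rightarrow> (('a + 'a set) list \<times> ('a + 'a set) list) set" where
  "repetition_pairs V E = {(A, B). A \<noteq> [] \<and> length A = length B \<and>
     (\<exists>ps a b. is_path V E ps \<and> (path_items ps = a @ A @ B @ b \<or> map Inl ps = a @ A @ B @ b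
        \<or> map Inr (path_edges ps) = a @ A @ B @ b))}"

lemma repetition_pairs_proper:
  assumes "(A, B) \<in> repetition_pairs V E"
  shows "A \<noteq> [] \<and> length A = length B \<and> distinct (A @ B)"
proof -
  obtain ps a b where q: "A \<noteq> []" "length A = length B" "is_path V E ps"
    "path_items ps = a @ A @ B @ b \<or> map Inl ps = a @ A @ B @ b
      \<or> map Inr (path_edges ps) = a @ A @ B @ b"
    using assms unfolding repetition_pairs_def by blast
  have "distinct ps"
    using q(3) unfolding is_path_def by simp
  then have "distinct (path_items ps)" "distinct (map Inl ps)" "distinct (map Inr (path_edges ps))"
    using distinct_path_items distinct_path_edges by (auto simp: distinct_map)
  then have "distinct (a @ A @ B @ b)"
    using q(4) by metis
  then show ?thesis
    using q(1,2) by auto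
qed

lemma map_eq_infixE:
  assumes "map f xs = a @ w @ b"
  obtains a' w' b' where "xs = a' @ w' @ b'" "w = map f w'"
proof -
  obtain a' ys where "xs = a' @ ys" "w @ b = map f ys"
    using assms by (auto simp: map_eq_append_conv)
  moreover from this(2) obtain w' b' where "ys = w' @ b'" "w = map f w'"
    by (metis map_eq_append_conv)
  ultimately show ?thesis
    using that by blast
qed

lemma nonrep_map_if_avoids:
  assumes "avoids Q H f" "set xs \<subseteq> H"
    and pairs: "\<And>a A B b. xs = a @ A @ B @ b \<Longrightarrow> A \<noteq> [] \<Longrightarrow> length A = length B \<Longrightarrow> (A, B) \<in> Q"
  shows "nonrep (map f xs)"
  unfolding nonrep_def
proof
  assume "\<exists>a r b. r \<noteq> [] \<and> map f xs = a @ r @ r @ b"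
  then obtain a r b where r: "r \<noteq> []" "map f xs = a @ r @ r @ b"
    by blast
  then have "map f xs = a @ (r @ r) @ b"
    by simp
  then obtain a' w b' where "xs = a' @ w @ b'" "r @ r = map f w"
    by (rule map_eq_infixE)
  moreover from this(2) obtain A B where "w = A @ B" "map f A = r" "map f B = r"
    by (metis map_eq_append_conv)
  ultimately have xs: "xs = a' @ A @ B @ b'" and "map f A = r" "map f B = r"
    by simp_all
  then have "A \<noteq> []" "length A = length B" "map f A = map f B"
    using r(1) by (auto dest: arg_cong[of _ _ length])
  moreover have "set A \<subseteq> H" "set B \<subseteq> H"
    using assms(2) xs by auto
  ultimately show False
    using pairs[OF xs] assms(1) unfolding avoids_def by blast
qed

lemma total_thue_if_avoids:
  assumes "avoids (repetition_pairs V E) (elems V E) f"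
  shows "total_thue V E f"
  unfolding total_thue_def
proof (intro allI impI conjI)
  fix ps
  assume p: "is_path V E ps"
  have sub: "set (path_items ps) \<subseteq> elems V E"
    using p by (rule set_path_items_subset_elems)
  show "nonrep (total_seq f ps)"
    unfolding total_seq_eq_map_path_items
    using nonrep_map_if_avoids[OF assms sub] p by (auto simp: repetition_pairs_def)
  have "nonrep (map f (map Inl ps))"
    using sub p by (intro nonrep_map_if_avoids[OF assms]) (auto simp: set_path_items repetition_pairs_def)
  then show "nonrep (map (\<lambda>v. f (Inl v)) ps)"
    by (simp add: comp_def)
  have "nonrep (map f (map Inr (path_edges ps)))"
    using sub p by (intro nonrep_map_if_avoids[OF assms]) (auto simp: set_path_items repetition_pairs_def)
  then show "nonrep (map (\<lambda>e. f (Inr e)) (path_edges ps))"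
    by (simp add: comp_def)
qed

section \<open>Counting short paths\<close>

definition walk :: "'a set set \<Rightarrow> 'a list \<Rightarrow> bool" where
  "walk E ws \<longleftrightarrow> (\<forall>i. Suc i < length ws \<longrightarrow> {ws ! i, ws ! Suc i} \<in> E)"

definition walks_from :: "'a set \<Rightarrow> 'a set set \<Rightarrow> 'a \<Rightarrow> nat \<Rightarrow> 'a list set" where
  "walks_from V E v m = {ws. length ws = Suc m \<and> hd ws = v \<and> walk E ws \<and> set ws \<subseteq> V}"

definition neighbours :: "'a set \<Rightarrow> 'a set set \<Rightarrow> 'a \<Rightarrow> 'a set" where
  "neighbours V E v = {w \<in> V. {v, w} \<in> E}"

definition paths_through :: "'a set \<Rightarrow> 'a set set \<Rightarrow> 'a \<Rightarrow> nat \<Rightarrow> 'a list set" where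
  "paths_through V E u m = {qs. is_path V E qs \<and> length qs = m \<and> u \<in> set qs}"

lemma walk_Cons_Cons: "walk E (v # w # ws) \<longleftrightarrow> {v, w} \<in> E \<and> walk E (w # ws)"
  unfolding walk_def by (auto simp: less_Suc_eq_0_disj)

lemma walk_take: "walk E ws \<Longrightarrow> walk E (take n ws)"
  unfolding walk_def by auto

lemma walk_drop: "walk E ws \<Longrightarrow> walk E (drop n ws)"
  unfolding walk_def by (auto simp: add.commute)

lemma walk_rev: "walk E ws \<Longrightarrow> walk E (rev ws)"
  unfolding walk_def
proof (intro allI impI)
  fix i
  assume walk: "\<forall>i. Suc i < length ws \<longrightarrow> {ws ! i, ws ! Suc i} \<in> E"
    and i: "Suc i < length (rev ws)"
  define k where "k = length ws - Suc (Suc i)"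
  have "rev ws ! i = ws ! Suc k" "rev ws ! Suc i = ws ! k" "Suc k < length ws"
    using i by (auto simp: rev_nth k_def Suc_diff_Suc)
  then show "{rev ws ! i, rev ws ! Suc i} \<in> E"
    using walk by (auto simp: insert_commute)
qed

lemma simple_graph_finite_edges: "simple_graph V E \<Longrightarrow> finite E"
proof -
  assume g: "simple_graph V E"
  then have "E \<subseteq> Pow V"
    unfolding simple_graph_def by auto
  then show "finite E"
    using g unfolding simple_graph_def by (meson finite_Pow_iff finite_subset)
qed

lemma finite_elems: "simple_graph V E \<Longrightarrow> finite (elems V E)"
  using simple_graph_finite_edges unfolding elems_def simple_graph_def by blast

lemma card_neighbours_le:
  assumes g: "simple_graph V E" and d: "max_degree_le V E D" and v: "v \<in> V"
  shows "finite (neighbours V E v)" "card (neighbours V E v) \<le> D"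
proof -
  show "finite (neighbours V E v)"
    using g unfolding neighbours_def simple_graph_def by simp
  have "inj_on (\<lambda>w. {v, w}) (neighbours V E v)"
    by (rule inj_onI) (auto simp: doubleton_eq_iff)
  moreover have "(\<lambda>w. {v, w}) ` neighbours V E v \<subseteq> {e \<in> E. v \<in> e}"
    unfolding neighbours_def by auto
  ultimately have "card (neighbours V E v) \<le> card {e \<in> E. v \<in> e}"
    using simple_graph_finite_edges[OF g] by (intro card_inj_on_le) auto
  also have "\<dots> \<le> D"
    using d v unfolding max_degree_le_def by auto
  finally show "card (neighbours V E v) \<le> D" .
qed

lemma walks_from_Suc:
  "walks_from V E v (Suc m) \<subseteq> (\<lambda>ws. v # ws) ` (\<Union>w\<in>neighbours V E v. walks_from V E w m)"
proof
  fix ws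
  assume ws: "ws \<in> walks_from V E v (Suc m)"
  then obtain w ws' where ws_eq: "ws = v # w # ws'"
    unfolding walks_from_def by (cases ws rule: path_items.cases) auto
  then have "w \<in> neighbours V E v" "w # ws' \<in> walks_from V E w m"
    using ws unfolding walks_from_def neighbours_def by (auto simp: walk_Cons_Cons)
  then show "ws \<in> (\<lambda>ws. v # ws) ` (\<Union>w\<in>neighbours V E v. walks_from V E w m)"
    using ws_eq by blast
qed

lemma card_walks_from_le:
  assumes g: "simple_graph V E" and d: "max_degree_le V E D" and "v \<in> V"
  shows "finite (walks_from V E v m) \<and> card (walks_from V E v m) \<le> D ^ m"
  using assms(3)
proof (induction m arbitrary: v)
  case 0
  then have "walks_from V E v 0 = {[v]}"
    unfolding walks_from_def walk_def by (auto simp: length_Suc_conv)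
  then show ?case by simp
next
  case (Suc m)
  let ?U = "\<Union>w\<in>neighbours V E v. walks_from V E w m"
  have N: "finite (neighbours V E v)" "card (neighbours V E v) \<le> D" "neighbours V E v \<subseteq> V"
    using card_neighbours_le[OF g d Suc.prems] unfolding neighbours_def by auto
  have IH: "finite (walks_from V E w m)" "card (walks_from V E w m) \<le> D ^ m"
    if "w \<in> neighbours V E v" for w
    using Suc.IH[of w] N(3) that by blast+
  then have "finite ?U"
    using N(1) by blast
  have "card (walks_from V E v (Suc m)) \<le> card ((\<lambda>ws. v # ws) ` ?U)"
    using \<open>finite ?U\<close> by (intro card_mono finite_imageI walks_from_Suc)
  also have "\<dots> \<le> (\<Sum>w\<in>neighbours V E v. card (walks_from V E w m))"
    using card_image_le[OF \<open>finite ?U\<close>] card_UN_le[OF N(1)] by (rule le_trans)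
  also have "\<dots> \<le> card (neighbours V E v) * D ^ m"
    using sum_mono[of "neighbours V E v" "\<lambda>w. card (walks_from V E w m)" "\<lambda>_. D ^ m"] IH(2)
    by simp
  also have "\<dots> \<le> D ^ Suc m"
    using N(2) by simp
  finally show ?case
    using finite_subset[OF walks_from_Suc finite_imageI[OF \<open>finite ?U\<close>]] by blast
qed

text \<open>Split a path with k + 1 vertices at u: a walk of length i from u, reversed, followed by
  a walk of length k - i from u.\<close>

lemma paths_through_subset_glued_walks:
  "paths_through V E u (Suc k)
    \<subseteq> (\<Union>i\<le>k. (\<lambda>(r, s). rev r @ tl s) ` (walks_from V E u i \<times> walks_from V E u (k - i)))"
proof
  fix qs
  assume "qs \<in> paths_through V E u (Suc k)"
  then have p: "is_path V E qs" "length qs = Suc k" "u \<in> set qs"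
    unfolding paths_through_def by auto
  then have "walk E qs" "set qs \<subseteq> V"
    unfolding is_path_def walk_def by auto
  obtain i where i: "i < length qs" "qs ! i = u"
    using p(3) by (metis in_set_conv_nth)
  have "rev (take (Suc i) qs) = u # rev (take i qs)"
    using i by (simp add: take_Suc_conv_app_nth)
  moreover have "walk E (rev (take (Suc i) qs))"
    using \<open>walk E qs\<close> by (intro walk_rev walk_take)
  ultimately have "rev (take (Suc i) qs) \<in> walks_from V E u i"
    using i \<open>set qs \<subseteq> V\<close> set_take_subset[of "Suc i" qs] unfolding walks_from_def by auto
  moreover have "drop i qs \<in> walks_from V E u (k - i)"
    using i p(2) \<open>walk E qs\<close> \<open>set qs \<subseteq> V\<close> set_drop_subset[of i qs]
    by (auto simp: walks_from_def hd_drop_conv_nth intro: walk_drop)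
  moreover have "rev (rev (take (Suc i) qs)) @ tl (drop i qs) = qs"
    by (simp add: tl_drop drop_Suc[symmetric])
  ultimately show "qs \<in> (\<Union>i\<le>k. (\<lambda>(r, s). rev r @ tl s) `
      (walks_from V E u i \<times> walks_from V E u (k - i)))"
    using i p(2) by force
qed

lemma card_paths_through_le:
  assumes g: "simple_graph V E" and d: "max_degree_le V E D" and u: "u \<in> V"
  shows "finite (paths_through V E u (Suc k)) \<and> card (paths_through V E u (Suc k)) \<le> Suc k * D ^ k"
proof -
  define W where "W i = (\<lambda>(r, s). rev r @ tl s) ` (walks_from V E u i \<times> walks_from V E u (k - i))"
    for i
  note walks = card_walks_from_le[OF g d u]
  have W: "finite (W i) \<and> card (W i) \<le> D ^ k" if "i \<le> k" for i
  proof -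
    have "card (W i) \<le> card (walks_from V E u i) * card (walks_from V E u (k - i))"
      unfolding W_def card_cartesian_product[symmetric] using walks by (intro card_image_le) simp
    also have "\<dots> \<le> D ^ i * D ^ (k - i)"
      using walks by (intro mult_mono) auto
    finally show ?thesis
      using walks that unfolding W_def by (simp add: power_add[symmetric])
  qed
  then have "finite (\<Union>i\<le>k. W i)"
    by auto
  have "card (paths_through V E u (Suc k)) \<le> card (\<Union>i\<le>k. W i)"
    using paths_through_subset_glued_walks \<open>finite (\<Union>i\<le>k. W i)\<close> unfolding W_def
    by (rule card_mono[rotated])
  also have "\<dots> \<le> (\<Sum>i\<le>k. card (W i))"
    by (rule card_UN_le) simp
  also have "\<dots> \<le> (\<Sum>i\<le>k. D ^ k)"
    using W by (intro sum_mono) blast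
  finally show ?thesis
    using finite_subset[OF paths_through_subset_glued_walks] \<open>finite (\<Union>i\<le>k. W i)\<close>
    unfolding W_def by simp
qed

lemma elems_anchor:
  assumes "simple_graph V E" "x \<in> elems V E"
  obtains u where "u \<in> V" "\<And>qs. x \<in> set (path_items qs) \<Longrightarrow> u \<in> set qs"
proof (cases x)
  case (Inl v)
  then show ?thesis
    using assms(2) that[of v] unfolding elems_def by (auto simp: set_path_items)
next
  case (Inr e)
  then obtain a b where "a \<in> V" "e = {a, b}"
    using assms unfolding elems_def simple_graph_def by blast
  then show ?thesis
    using Inr that[of a] path_edge_subset by (fastforce simp: set_path_items)
qed

text \<open>Candidates for the block A @ B of a repetition pair with |A| = |B| = j that meets an
  element at u: read off the total sequence (starting at a vertex or at an edge), the vertex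
  sequence or the edge sequence of a short path through u.\<close>

definition windows_through :: "'a set \<Rightarrow> 'a set set \<Rightarrow> 'a \<Rightarrow> nat \<Rightarrow> ('a + 'a set) list set" where
  "windows_through V E u j =
     (\<lambda>(s, qs). take (2 * j) (drop s (path_items qs))) ` ({..1} \<times> paths_through V E u (Suc j))
     \<union> map Inl ` paths_through V E u (2 * j)
     \<union> (\<lambda>qs. map Inr (path_edges qs)) ` paths_through V E u (Suc (2 * j))"

lemma repetition_block_in_windows_through:
  assumes anchor: "\<And>qs. x \<in> set (path_items qs) \<Longrightarrow> u \<in> set qs"
    and AB: "(A, B) \<in> repetition_pairs V E" "x \<in> set (A @ B)" "length A = j"
  shows "A @ B \<in> windows_through V E u j"
proof -
  obtain ps a b where "A \<noteq> []" "length A = length B" "is_path V E ps"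
    and ps: "path_items ps = a @ (A @ B) @ b \<or> map Inl ps = a @ (A @ B) @ b
      \<or> map Inr (path_edges ps) = a @ (A @ B) @ b"
    using AB(1) unfolding repetition_pairs_def by auto
  then have len: "length (A @ B) = 2 * j" and j: "1 \<le> j"
    using AB(3) by (auto simp: Suc_le_eq)
  from ps show ?thesis
  proof (elim disjE)
    assume "path_items ps = a @ (A @ B) @ b"
    then obtain s qs where "s \<le> 1" "is_path V E qs" "length qs = Suc j"
      and w: "A @ B = take (2 * j) (drop s (path_items qs))"
      using short_path_of_path_items_infix[OF \<open>is_path V E ps\<close> _ len j] by blast
    moreover have "x \<in> set (path_items qs)"
      using AB(2) unfolding w by (meson in_set_dropD in_set_takeD)
    ultimately show ?thesis
      using anchor unfolding windows_through_def paths_through_def by force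
  next
    assume "map Inl ps = a @ (A @ B) @ b"
    then obtain ps1 qs d where qs: "ps = ps1 @ qs @ d" "A @ B = map Inl qs"
      by (rule map_eq_infixE)
    moreover from this have "is_path V E qs"
      using \<open>is_path V E ps\<close> len j by (intro is_path_infix[of V E ps1 qs]) auto
    moreover have "x \<in> set (path_items qs)"
      using AB(2) qs(2) by (auto simp: set_path_items)
    ultimately show ?thesis
      using anchor len unfolding windows_through_def paths_through_def
      by (metis (mono_tags, lifting) UnI1 UnI2 image_eqI length_map mem_Collect_eq)
  next
    assume "map Inr (path_edges ps) = a @ (A @ B) @ b"
    then obtain a' es b' where "path_edges ps = a' @ es @ b'" "A @ B = map Inr es"
      by (rule map_eq_infixE)
    moreover from this obtain qs where "is_path V E qs" "length qs = Suc (length es)"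
      "path_edges qs = es"
      using short_path_of_path_edges_infix[OF \<open>is_path V E ps\<close>] by blast
    moreover have "x \<in> set (path_items qs)"
      using AB(2) calculation by (auto simp: set_path_items)
    ultimately show ?thesis
      using anchor len unfolding windows_through_def paths_through_def by force
  qed
qed

lemma repetition_pairs_at_subset_windows:
  assumes anchor: "\<And>qs. x \<in> set (path_items qs) \<Longrightarrow> u \<in> set qs"
  shows "{q \<in> pairs_at (repetition_pairs V E) X x. length (fst q) = j}
           \<subseteq> (\<lambda>w. (take j w, drop j w)) ` windows_through V E u j"
proof
  fix q
  assume q: "q \<in> {q \<in> pairs_at (repetition_pairs V E) X x. length (fst q) = j}"
  obtain A B where q_AB: "q = (A, B)"
    by fastforce
  then have "(A, B) \<in> repetition_pairs V E" "x \<in> set (A @ B)" "length A = j"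
    using q unfolding pairs_at_def by auto
  then have "A @ B \<in> windows_through V E u j"
    using repetition_block_in_windows_through[OF anchor] by blast
  then show "q \<in> (\<lambda>w. (take j w, drop j w)) ` windows_through V E u j"
    using q_AB \<open>length A = j\<close> by force
qed

lemma card_windows_through_le:
  assumes g: "simple_graph V E" and d: "max_degree_le V E D" and u: "u \<in> V"
  shows "finite (windows_through V E u (Suc i))"
    and "card (windows_through V E u (Suc i)) \<le>
      2 * ((i + 2) * D ^ (i + 1)) + (2 * i + 2) * D ^ (2 * i + 1) + (2 * i + 3) * D ^ (2 * i + 2)"
proof -
  define W1 where "W1 = (\<lambda>(s, qs). take (2 * Suc i) (drop s (path_items qs))) `
    ({..1::nat} \<times> paths_through V E u (Suc (Suc i)))"
  define W2 where "W2 = (map Inl ` paths_through V E u (Suc (2 * i + 1)) :: ('a + 'a set) list set)"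
  define W3 where "W3 = ((\<lambda>qs. map Inr (path_edges qs)) ` paths_through V E u (Suc (2 * i + 2))
    :: ('a + 'a set) list set)"
  have W: "windows_through V E u (Suc i) = W1 \<union> W2 \<union> W3"
    unfolding windows_through_def W1_def W2_def W3_def by (simp add: numeral_eq_Suc)
  note P = card_paths_through_le[OF g d u]
  have "card W1 \<le> card ({..1::nat} \<times> paths_through V E u (Suc (Suc i)))"
    unfolding W1_def using P by (intro card_image_le) simp
  also have "\<dots> \<le> 2 * ((i + 2) * D ^ (i + 1))"
    using P[of "Suc i"] by (simp add: card_cartesian_product)
  finally have W1_le: "card W1 \<le> 2 * ((i + 2) * D ^ (i + 1))" .
  have "card W2 \<le> card (paths_through V E u (Suc (2 * i + 1)))"
    unfolding W2_def using P by (intro card_image_le) simp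
  then have W2_le: "card W2 \<le> (2 * i + 2) * D ^ (2 * i + 1)"
    using le_trans[OF _ conjunct2[OF P[of "2 * i + 1"]]] by (simp add: eval_nat_numeral)
  have "card W3 \<le> card (paths_through V E u (Suc (2 * i + 2)))"
    unfolding W3_def using P by (intro card_image_le) simp
  then have W3_le: "card W3 \<le> (2 * i + 3) * D ^ (2 * i + 2)"
    using le_trans[OF _ conjunct2[OF P[of "2 * i + 2"]]] by (simp add: eval_nat_numeral)
  have "finite W1" "finite W2" "finite W3"
    unfolding W1_def W2_def W3_def using P by auto
  then show "finite (windows_through V E u (Suc i))"
    unfolding W by simp
  have "card (windows_through V E u (Suc i)) \<le> card W1 + card W2 + card W3"
    unfolding W using card_Un_le[of "W1 \<union> W2" W3] card_Un_le[of W1 W2] by linarith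
  then show "card (windows_through V E u (Suc i)) \<le>
      2 * ((i + 2) * D ^ (i + 1)) + (2 * i + 2) * D ^ (2 * i + 1) + (2 * i + 3) * D ^ (2 * i + 2)"
    using W1_le W2_le W3_le by linarith
qed

lemma window_count_le:
  fixes D :: nat
  assumes "3 \<le> D"
  shows "2 * ((i + 2) * D ^ (i + 1)) + (2 * i + 2) * D ^ (2 * i + 1) + (2 * i + 3) * D ^ (2 * i + 2)
    \<le> 5 * 2 ^ i * D ^ (2 * i + 2)"
proof -
  have "D ^ 1 \<le> D ^ (i + 1)"
    using assms by (intro power_increasing) auto
  then have "3 \<le> D ^ (i + 1)"
    using order_trans[OF assms] by (simp only: power_one_right)
  moreover have "D ^ (2 * i + 2) = D ^ (i + 1) * D ^ (i + 1)"
    unfolding power_add[symmetric] by (simp add: mult_2)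
  ultimately have D1: "3 * D ^ (i + 1) \<le> D ^ (2 * i + 2)"
    by (metis mult_right_mono zero_le)
  have D2: "3 * D ^ (2 * i + 1) \<le> D ^ (2 * i + 2)"
    using assms by simp
  have i: "2 * i + 3 \<le> 3 * 2 ^ i"
    by (induction i) auto
  have "3 * (2 * ((i + 2) * D ^ (i + 1)) + (2 * i + 2) * D ^ (2 * i + 1)
        + (2 * i + 3) * D ^ (2 * i + 2))
      = 2 * (i + 2) * (3 * D ^ (i + 1)) + (2 * i + 2) * (3 * D ^ (2 * i + 1))
        + 3 * (2 * i + 3) * D ^ (2 * i + 2)"
    by (simp add: algebra_simps)
  also have "\<dots> \<le> 2 * (i + 2) * D ^ (2 * i + 2) + (2 * i + 2) * D ^ (2 * i + 2)
        + 3 * (2 * i + 3) * D ^ (2 * i + 2)"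
    using D1 D2 by (intro add_mono mult_left_mono) auto
  also have "\<dots> = 5 * (2 * i + 3) * D ^ (2 * i + 2)"
    by (simp add: algebra_simps)
  also have "\<dots> \<le> 5 * (3 * 2 ^ i) * D ^ (2 * i + 2)"
    using i by (intro mult_right_mono) auto
  finally show ?thesis
    by simp
qed

lemma sum_power_by_level_le:
  fixes r :: real and level :: "'q \<Rightarrow> nat" and c :: "nat \<Rightarrow> real"
  assumes "finite S" "\<And>q. q \<in> S \<Longrightarrow> level q \<in> {1..K}"
    and "\<And>i. card {q \<in> S. level q = Suc i} \<le> c i" and "0 \<le> r"
  shows "(\<Sum>q\<in>S. r ^ (level q - 1)) \<le> (\<Sum>i<K. c i * r ^ i)"
proof -
  have "(\<Sum>q\<in>S. r ^ (level q - 1))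
      = (\<Sum>l\<in>{1..K}. \<Sum>q\<in>{q \<in> S. level q = l}. r ^ (level q - 1))"
    using assms(1,2) by (intro sum.group[symmetric]) auto
  also have "\<dots> = (\<Sum>l\<in>{1..K}. card {q \<in> S. level q = l} * r ^ (l - 1))"
    by (intro sum.cong) auto
  also have "\<dots> = (\<Sum>i<K. card {q \<in> S. level q = Suc i} * r ^ i)"
    by (simp add: sum.atLeast1_atMost_eq)
  also have "\<dots> \<le> (\<Sum>i<K. c i * r ^ i)"
    using assms(3,4) by (intro sum_mono mult_right_mono) auto
  finally show ?thesis .
qed

lemma power_scaling_eq:
  fixes D :: real
  assumes "D \<noteq> 0"
  shows "5 * 2 ^ i * D ^ (2 * i + 2) * (1 / (8 * D\<^sup>2)) ^ i = 5 * D\<^sup>2 * (1 / 4) ^ i"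
proof -
  have "(8 * D\<^sup>2) ^ i = (2 * 4) ^ i * (D\<^sup>2) ^ i"
    by (simp add: power_mult_distrib)
  also have "\<dots> = 2 ^ i * 4 ^ i * D ^ (2 * i)"
    by (simp only: power_mult_distrib power_mult)
  finally have e: "(8 * D\<^sup>2) ^ i = 2 ^ i * 4 ^ i * D ^ (2 * i)" .
  have "D ^ (2 * i) \<noteq> 0"
    using assms by simp
  then show ?thesis
    unfolding power_add power_one_over e by (simp add: field_simps)
qed

lemma card_repetition_pairs_at_length_le:
  fixes D :: nat
  assumes g: "simple_graph V E" and d: "max_degree_le V E D" and "3 \<le> D"
    and x: "x \<in> elems V E"
  shows "card {q \<in> pairs_at (repetition_pairs V E) X x. length (fst q) = Suc i}
    \<le> 5 * 2 ^ i * D ^ (2 * i + 2)"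
proof -
  obtain u where "u \<in> V" and anchor: "\<And>qs. x \<in> set (path_items qs) \<Longrightarrow> u \<in> set qs"
    using elems_anchor[OF g x] by blast
  note W = card_windows_through_le[OF g d \<open>u \<in> V\<close>, of i]
  have "card {q \<in> pairs_at (repetition_pairs V E) X x. length (fst q) = Suc i}
      \<le> card ((\<lambda>w. (take (Suc i) w, drop (Suc i) w)) ` windows_through V E u (Suc i))"
    using repetition_pairs_at_subset_windows[OF anchor] W(1) by (intro card_mono) auto
  also have "\<dots> \<le> card (windows_through V E u (Suc i))"
    using W(1) by (rule card_image_le)
  also have "\<dots> \<le> 5 * 2 ^ i * D ^ (2 * i + 2)"
    using W(2) window_count_le[OF \<open>3 \<le> D\<close>] by (rule le_trans)
  finally show ?thesis .
qed

lemma weight_repetition_pairs_at_le: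
  fixes D :: nat
  assumes g: "simple_graph V E" and d: "max_degree_le V E D" and "3 \<le> D"
    and x: "x \<in> elems V E"
  shows "(\<Sum>q\<in>pairs_at (repetition_pairs V E) (elems V E) x.
      (1 / (8 * (real D)\<^sup>2)) ^ (length (fst q) - 1)) \<le> 7 * (real D)\<^sup>2"
proof -
  define S where "S = pairs_at (repetition_pairs V E) (elems V E) x"
  define r :: real where "r = 1 / (8 * (real D)\<^sup>2)"
  have "finite S"
    unfolding S_def using finite_pairs_at[OF finite_elems[OF g]] repetition_pairs_proper by blast
  moreover have "length (fst q) \<in> {1..card (elems V E)}" if "q \<in> S" for q
    using that repetition_pairs_proper[of "fst q" "snd q" V E]
    unfolding S_def by (intro length_pairs_at_in[OF finite_elems[OF g]]) (auto simp: pairs_at_def)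
  moreover have "card {q \<in> S. length (fst q) = Suc i} \<le> 5 * 2 ^ i * real D ^ (2 * i + 2)" for i
    using of_nat_mono[OF card_repetition_pairs_at_length_le[OF g d \<open>3 \<le> D\<close> x], where 'a = real]
    unfolding S_def by simp
  ultimately have "(\<Sum>q\<in>S. r ^ (length (fst q) - 1))
      \<le> (\<Sum>i<card (elems V E). 5 * 2 ^ i * real D ^ (2 * i + 2) * r ^ i)"
    unfolding r_def by (intro sum_power_by_level_le) auto
  also have "\<dots> = 5 * (real D)\<^sup>2 * (\<Sum>i<card (elems V E). (1 / 4) ^ i)"
    using \<open>3 \<le> D\<close> unfolding r_def sum_distrib_left
    by (intro sum.cong refl power_scaling_eq) simp
  also have "\<dots> \<le> 5 * (real D)\<^sup>2 * (4 / 3)"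
    by (intro mult_left_mono) (auto simp: sum_gp_strict)
  also have "\<dots> \<le> 7 * (real D)\<^sup>2"
    by simp
  finally show ?thesis
    unfolding S_def r_def .
qed

lemma obtain_sublists_card_eq:
  assumes "\<And>x. x \<in> X \<Longrightarrow> infinite (L x) \<or> n \<le> card (L x)"
  obtains L' where "\<And>x. x \<in> X \<Longrightarrow> L' x \<subseteq> L x \<and> finite (L' x) \<and> card (L' x) = n"
proof -
  have "\<exists>S. S \<subseteq> L x \<and> finite S \<and> card S = n" if "x \<in> X" for x
    using assms[OF that] infinite_arbitrarily_large[of "L x" n]
      obtain_subset_with_card_n[of n "L x"] card.infinite[of "L x"]
    by (metis card_ge_0_finite finite_subset)
  then show ?thesis
    using that by metis
qed

lemma rosenfeld_counting_repetition_pairs: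
  assumes g: "simple_graph V E" and d: "max_degree_le V E \<Delta>" and "3 \<le> \<Delta>"
    and L: "\<And>x. x \<in> elems V E \<Longrightarrow> finite (L x) \<and> card (L x) = 15 * \<Delta>\<^sup>2"
  shows "rosenfeld_counting (elems V E) L (repetition_pairs V E) (15 * \<Delta>\<^sup>2) (8 * (real \<Delta>)\<^sup>2)"
proof
  show "finite (elems V E)"
    using g by (rule finite_elems)
  show "finite (L x)" "15 * \<Delta>\<^sup>2 \<le> card (L x)" if "x \<in> elems V E" for x
    using L[OF that] by auto
  show "A \<noteq> [] \<and> length A = length B \<and> distinct (A @ B)"
    if "(A, B) \<in> repetition_pairs V E" for A B
    using that by (rule repetition_pairs_proper)
  show "0 < 8 * (real \<Delta>)\<^sup>2"
    using \<open>3 \<le> \<Delta>\<close> by simp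
  show "(\<Sum>q\<in>pairs_at (repetition_pairs V E) (elems V E) x.
      (1 / (8 * (real \<Delta>)\<^sup>2)) ^ (length (fst q) - 1)) \<le> real (15 * \<Delta>\<^sup>2) - 8 * (real \<Delta>)\<^sup>2"
    if "x \<in> elems V E" for x
    using weight_repetition_pairs_at_le[OF g d \<open>3 \<le> \<Delta>\<close> that] by simp
qed

theorem theorem20:
  fixes V :: "'a set" and E :: "'a set set" and \<Delta> :: nat
    and L :: "'a + 'a set \<Rightarrow> nat set"
  assumes "\<Delta> \<ge> 3"
    and "simple_graph V E"
    and "max_degree_le V E \<Delta>"
    and "\<forall>x\<in>elems V E. infinite (L x) \<or> real (card (L x)) \<ge> 17.9856 * (real \<Delta>)\<^sup>2"
  shows "\<exists>\<phi>. total_thue V E \<phi> \<and> (\<forall>x\<in>elems V E. \<phi> x \<in> L x)"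
proof -
  have "infinite (L x) \<or> 15 * \<Delta>\<^sup>2 \<le> card (L x)" if "x \<in> elems V E" for x
  proof -
    have "real (15 * \<Delta>\<^sup>2) \<le> 17.9856 * (real \<Delta>)\<^sup>2"
      by simp
    moreover have "infinite (L x) \<or> 17.9856 * (real \<Delta>)\<^sup>2 \<le> card (L x)"
      using assms(4) that by blast
    ultimately show ?thesis
      by (smt (verit) of_nat_le_iff)
  qed
  then obtain L' where L': "\<And>x. x \<in> elems V E \<Longrightarrow> L' x \<subseteq> L x \<and> finite (L' x) \<and> card (L' x) = 15 * \<Delta>\<^sup>2"
    using obtain_sublists_card_eq by metis
  then obtain f where "f \<in> Pi\<^sub>E (elems V E) L'" "avoids (repetition_pairs V E) (elems V E) f"
    using rosenfeld_counting.ex_avoiding_colouring[OF rosenfeld_counting_repetition_pairs[OF assms(2,3,1)]]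
    by blast
  then show ?thesis
    using total_thue_if_avoids L' by (fastforce simp: PiE_iff)
qed

end
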